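(* Let $(X,\beta,m)$ be a non-atomic standard probability space and $\tau$ an ergodic invertible measure-preserving map of $X$. Let $(\epsilon_n)_{n\ge1}$ be a decreasing sequence with $0<\epsilon_n\le1$, $\epsilon_n\to0$, and $\sum_{n=1}^\infty\epsilon_n=\infty$. Then there is a decreasing sequence $(B_n)_{n\ge1}$ of measurable sets with $m(B_n)=\epsilon_n$ for all $n$ which is an a.e. visible shrinking target for $\tau$: for a.e. $x\in X$, $\tau^n(x)\in B_n$ for infinitely many $n$. *)

theory Defs
  imports "HOL-Probability.Probability"
begin

text \<open>Standard probability space: a Polish space with its Borel sigma-algebra
  (every standard Borel space is isomorphic to such) carrying a probability measure.\<close>
definition standard_prob_space :: "'a::polish_space measure \<Rightarrow> bool" where
  "standard_prob_space M \<longleftrightarrow> prob_space M \<and> sets M = sets borel"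

definition non_atomic :: "'a measure \<Rightarrow> bool" where
  "non_atomic M \<longleftrightarrow> (\<forall>A\<in>sets M. measure M A > 0 \<longrightarrow>
      (\<exists>B\<in>sets M. B \<subseteq> A \<and> 0 < measure M B \<and> measure M B < measure M A))"

definition measure_preserving_map :: "'a measure \<Rightarrow> ('a \<Rightarrow> 'a) \<Rightarrow> bool" where
  "measure_preserving_map M T \<longleftrightarrow> T \<in> measurable M M \<and> distr M M T = M"

definition invertible_mpt :: "'a measure \<Rightarrow> ('a \<Rightarrow> 'a) \<Rightarrow> bool" where
  "invertible_mpt M T \<longleftrightarrow> bij_betw T (space M) (space M) \<and> measure_preserving_map M T
      \<and> measure_preserving_map M (inv_into (space M) T)"

definition ergodic :: "'a measure \<Rightarrow> ('a \<Rightarrow> 'a) \<Rightarrow> bool" where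
  "ergodic M T \<longleftrightarrow> (\<forall>A\<in>sets M. T -` A \<inter> space M = A \<longrightarrow> measure M A = 0 \<or> measure M A = 1)"

end

theory Submission
  imports Defs
begin

text \<open>
  For every \<open>j\<close> a level function of height \<open>h\<^sub>j\<close> is built from the hitting time of a set of
  tiny measure: by ergodicity almost every orbit climbs the levels \<open>0, \<dots>, h\<^sub>j - 1\<close> one step at a
  time, and every level has measure at most \<open>2 / h\<^sub>j\<close>. The levels are cut into consecutive blocks
  of lengths \<open>d \<ge> D\<^sub>j\<close>, and the last level of a block of length \<open>d\<close> is put into every target
  \<open>B\<^sub>n\<close> with \<open>n \<le> d\<close>. Since \<open>\<Sum> \<epsilon>\<^sub>n = \<infinity>\<close>, the block lengths can be chosen so that at most
  \<open>c\<^sub>j h\<^sub>j \<epsilon>\<^sub>n\<close> blocks have length \<open>\<ge> n\<close>; summing \<open>2 c\<^sub>j \<epsilon>\<^sub>n\<close> over \<open>j\<close> gives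
  \<open>m(B\<^sub>n) \<le> \<epsilon>\<^sub>n\<close>. A point whose level is not among the last \<open>j + 1\<close> levels of its block
  reaches the end of the block after \<open>n > j\<close> steps and lands in \<open>B\<^sub>n\<close>; the exceptional
  points have measure \<open>O(j / D\<^sub>j)\<close>, so by Borel--Cantelli almost every point visits the targets
  infinitely often. Finally non-atomicity (Sierpinski's intermediate value property) enlarges the
  \<open>B\<^sub>n\<close> to measure exactly \<open>\<epsilon>\<^sub>n\<close>.
\<close>

section \<open>Non-atomic measures\<close>

lemma (in finite_measure) non_atomic_half_subset:
  assumes "non_atomic M" and A: "A \<in> sets M" and "0 < measure M A"
  shows "\<exists>B\<in>sets M. B \<subseteq> A \<and> 0 < measure M B \<and> measure M B \<le> measure M A / 2"
proof -
  obtain B where B: "B \<in> sets M" "B \<subseteq> A" "0 < measure M B" "measure M B < measure M A"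
    using assms unfolding non_atomic_def by blast
  have "measure M (A - B) = measure M A - measure M B"
    using finite_measure_Diff[OF A B(1,2)] .
  then show ?thesis
  proof (cases "measure M B \<le> measure M A / 2")
    case False
    with A B show ?thesis
      by (intro bexI[of _ "A - B"]) (auto simp: \<open>measure M (A - B) = _\<close>)
  qed (use B in blast)
qed

lemma (in finite_measure) non_atomic_small_subset:
  assumes na: "non_atomic M" and A: "A \<in> sets M" "0 < measure M A" and "0 < \<eta>"
  shows "\<exists>B\<in>sets M. B \<subseteq> A \<and> 0 < measure M B \<and> measure M B < \<eta>"
proof -
  have halved: "\<exists>B\<in>sets M. B \<subseteq> A \<and> 0 < measure M B \<and> measure M B \<le> measure M A / 2 ^ k" for k
  proof (induction k)
    case 0
    show ?case using A by auto
  next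
    case (Suc k)
    then obtain B where B: "B \<in> sets M" "B \<subseteq> A" "0 < measure M B"
        "measure M B \<le> measure M A / 2 ^ k"
      by blast
    obtain C where C: "C \<in> sets M" "C \<subseteq> B" "0 < measure M C" "measure M C \<le> measure M B / 2"
      using non_atomic_half_subset[OF na B(1,3)] by blast
    have "measure M B / 2 \<le> measure M A / 2 ^ k / 2"
      using B(4) by simp
    with C(4) have "measure M C \<le> measure M A / 2 ^ k / 2"
      by (rule order_trans)
    then have "measure M C \<le> measure M A / 2 ^ Suc k"
      by (simp add: mult.commute)
    with B C show ?case by (intro bexI[of _ C]) auto
  qed
  obtain k where "measure M A / \<eta> < 2 ^ k"
    using real_arch_pow[of 2 "measure M A / \<eta>"] by auto
  then have "measure M A < \<eta> * 2 ^ k"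
    using \<open>0 < \<eta>\<close> by (simp add: pos_divide_less_eq mult.commute)
  then have "measure M A / 2 ^ k < \<eta>"
    by (simp add: pos_divide_less_eq)
  moreover obtain B where "B \<in> sets M" "B \<subseteq> A" "0 < measure M B"
    "measure M B \<le> measure M A / 2 ^ k"
    using halved by blast
  ultimately show ?thesis by (intro bexI[of _ B]) auto
qed

lemma (in finite_measure) exists_near_maximal_extension:
  assumes "X \<in> sets M" and "measure M X \<le> t"
  shows "\<exists>C\<in>sets M. C \<subseteq> S - X \<and> measure M X + measure M C \<le> t \<and>
           (\<forall>C'\<in>sets M. C' \<subseteq> S - X \<longrightarrow> measure M X + measure M C' \<le> t \<longrightarrow>
              measure M C' \<le> 2 * measure M C)"
proof -
  define adm where "adm C \<longleftrightarrow> C \<in> sets M \<and> C \<subseteq> S - X \<and> measure M X + measure M C \<le> t" for C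
  define \<sigma> where "\<sigma> = (SUP C\<in>{C. adm C}. measure M C)"
  have "adm {}"
    using assms by (simp add: adm_def)
  have bdd: "bdd_above (measure M ` {C. adm C})"
    by (auto intro!: bdd_aboveI[of _ "measure M (space M)"] bounded_measure)
  have le_\<sigma>: "measure M C \<le> \<sigma>" if "adm C" for C
    unfolding \<sigma>_def using that bdd by (intro cSUP_upper) auto
  obtain C where "adm C" "\<sigma> \<le> 2 * measure M C"
  proof (cases "\<sigma> \<le> 0")
    case True
    then show thesis
      using that[of "{}"] \<open>adm {}\<close> by simp
  next
    case False
    then have "\<sigma> / 2 < \<sigma>" by simp
    then obtain C where "adm C" "\<sigma> / 2 < measure M C"
      unfolding \<sigma>_def using \<open>adm {}\<close> bdd by (subst (asm) less_cSUP_iff) auto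
    then show thesis
      using that[of C] by simp
  qed
  show ?thesis
  proof (intro bexI[of _ C] conjI ballI impI)
    fix C' assume "C' \<in> sets M" "C' \<subseteq> S - X" "measure M X + measure M C' \<le> t"
    then have "measure M C' \<le> \<sigma>"
      by (intro le_\<sigma>) (simp add: adm_def)
    with \<open>\<sigma> \<le> 2 * measure M C\<close> show "measure M C' \<le> 2 * measure M C"
      by linarith
  qed (use \<open>adm C\<close> in \<open>simp_all add: adm_def\<close>)
qed

lemma (in finite_measure) exists_saturated_subset:
  assumes S: "S \<in> sets M" and "0 \<le> t"
  shows "\<exists>U\<in>sets M. U \<subseteq> S \<and> measure M U \<le> t \<and>
           (\<forall>C\<in>sets M. C \<subseteq> S - U \<longrightarrow> measure M U + measure M C \<le> t \<longrightarrow> measure M C = 0)"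
proof -
  define P where "P X \<longleftrightarrow> X \<in> sets M \<and> X \<subseteq> S \<and> measure M X \<le> t" for X
  define Q where "Q X Y \<longleftrightarrow> X \<subseteq> Y \<and> (\<forall>C\<in>sets M. C \<subseteq> S - X \<longrightarrow> measure M X + measure M C \<le> t \<longrightarrow>
                    measure M C \<le> 2 * (measure M Y - measure M X))" for X Y
  \<comment> \<open>greedily add sets of at least half the largest admissible measure\<close>
  have "\<exists>U. \<forall>k. P (U k) \<and> Q (U k) (U (Suc k))"
  proof (rule dependent_nat_choice)
    fix X k assume "P X"
    then obtain C where C: "C \<in> sets M" "C \<subseteq> S - X" "measure M X + measure M C \<le> t"
      "\<And>C'. C' \<in> sets M \<Longrightarrow> C' \<subseteq> S - X \<Longrightarrow> measure M X + measure M C' \<le> t \<Longrightarrow>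
         measure M C' \<le> 2 * measure M C"
      using exists_near_maximal_extension[of X t S] unfolding P_def by blast
    have "measure M (X \<union> C) = measure M X + measure M C"
      using \<open>P X\<close> C(1,2) by (intro finite_measure_Union) (auto simp: P_def)
    then have "P (X \<union> C)"
      using \<open>P X\<close> C(1-3) unfolding P_def by auto
    moreover have "Q X (X \<union> C)"
      unfolding Q_def
    proof (intro conjI ballI impI)
      fix C' assume "C' \<in> sets M" "C' \<subseteq> S - X" "measure M X + measure M C' \<le> t"
      then show "measure M C' \<le> 2 * (measure M (X \<union> C) - measure M X)"
        using C(4) \<open>measure M (X \<union> C) = _\<close> by simp
    qed auto
    ultimately show "\<exists>Y. P Y \<and> Q X Y" by blast
  qed (use \<open>0 \<le> t\<close> in \<open>auto simp: P_def\<close>)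
  then obtain U where U: "\<And>k. U k \<in> sets M \<and> U k \<subseteq> S \<and> measure M (U k) \<le> t"
    and U_Suc: "\<And>k. Q (U k) (U (Suc k))"
    unfolding P_def by blast
  define V where "V = (\<Union>k. U k)"
  have "incseq U"
    using U_Suc by (intro incseq_SucI) (simp add: Q_def)
  then have lim_U: "(\<lambda>k. measure M (U k)) \<longlonglongrightarrow> measure M V"
    unfolding V_def using U by (intro finite_Lim_measure_incseq) auto
  have V: "V \<in> sets M" "V \<subseteq> S" "measure M V \<le> t"
    using U LIMSEQ_le_const2[OF lim_U, of t] unfolding V_def by auto
  have "(\<lambda>k. measure M (U (Suc k)) - measure M (U k)) \<longlonglongrightarrow> 0"
    using tendsto_diff[OF LIMSEQ_Suc[OF lim_U] lim_U] by simp
  then have lim_increment: "(\<lambda>k. 2 * (measure M (U (Suc k)) - measure M (U k))) \<longlonglongrightarrow> 0"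
    by (rule tendsto_mult_right_zero)
  have saturated: "measure M C = 0"
    if C: "C \<in> sets M" "C \<subseteq> S - V" "measure M V + measure M C \<le> t" for C
  proof -
    have "measure M C \<le> 2 * (measure M (U (Suc k)) - measure M (U k))" for k
    proof -
      have "U k \<subseteq> V" by (auto simp: V_def)
      then have "C \<subseteq> S - U k" "measure M (U k) \<le> measure M V"
        using C(2) V(1) by (auto intro: finite_measure_mono)
      then show ?thesis
        using U_Suc[of k] C(1,3) unfolding Q_def by auto
    qed
    then have "measure M C \<le> 0"
      by (intro LIMSEQ_le_const[OF lim_increment]) auto
    then show ?thesis
      using measure_nonneg[of M C] by linarith
  qed
  show ?thesis
    using V saturated by (intro bexI[of _ V]) simp_all
qed

lemma (in finite_measure) non_atomic_subset_with_measure: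
  assumes na: "non_atomic M" and S: "S \<in> sets M" and t: "0 \<le> t" "t \<le> measure M S"
  shows "\<exists>B\<in>sets M. B \<subseteq> S \<and> measure M B = t"
proof -
  obtain U where U: "U \<in> sets M" "U \<subseteq> S" "measure M U \<le> t"
    and saturated: "\<And>C. C \<in> sets M \<Longrightarrow> C \<subseteq> S - U \<Longrightarrow> measure M U + measure M C \<le> t \<Longrightarrow>
                      measure M C = 0"
    using exists_saturated_subset[OF S t(1)] by blast
  have "measure M U = t"
  proof (rule ccontr)
    assume "measure M U \<noteq> t"
    then have "measure M U < t" using U(3) by simp
    moreover have "measure M (S - U) = measure M S - measure M U"
      using finite_measure_Diff[OF S U(1,2)] .
    ultimately have "0 < measure M (S - U)" using t(2) by simp
    then obtain C where "C \<in> sets M" "C \<subseteq> S - U" "0 < measure M C" "measure M C < t - measure M U"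
      using non_atomic_small_subset[OF na, of "S - U" "t - measure M U"] S U(1)
        \<open>measure M U < t\<close> by auto
    with saturated show False by force
  qed
  with U show ?thesis by (intro bexI[of _ U]) auto
qed

lemma (in finite_measure) non_atomic_intermediate_set:
  assumes na: "non_atomic M" and sets: "K \<in> sets M" "X \<in> sets M" and "K \<subseteq> X"
    and t: "measure M K \<le> t" "t \<le> measure M X"
  shows "\<exists>Y\<in>sets M. K \<subseteq> Y \<and> Y \<subseteq> X \<and> measure M Y = t"
proof -
  have "measure M (X - K) = measure M X - measure M K"
    using finite_measure_Diff[OF sets(2,1) \<open>K \<subseteq> X\<close>] .
  then obtain C where C: "C \<in> sets M" "C \<subseteq> X - K" "measure M C = t - measure M K"
    using non_atomic_subset_with_measure[OF na, of "X - K" "t - measure M K"] sets t by auto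
  have "measure M (K \<union> C) = measure M K + measure M C"
    using C sets by (intro finite_measure_Union) auto
  with C sets \<open>K \<subseteq> X\<close> show ?thesis
    by (intro bexI[of _ "K \<union> C"]) auto
qed

lemma (in prob_space) non_atomic_enlarge_to_measures:
  assumes na: "non_atomic M" and K: "\<And>n. K n \<in> sets M" "decseq K"
    and K_le: "\<And>n. measure M (K n) \<le> \<epsilon> n" and "decseq \<epsilon>" and \<epsilon>_le_1: "\<And>n. \<epsilon> n \<le> 1"
  shows "\<exists>B. \<forall>n. B n \<in> sets M \<and> measure M (B n) = \<epsilon> n \<and> K n \<subseteq> B n \<and> B (Suc n) \<subseteq> B n"
proof -
  have "\<exists>B. \<forall>n. (B n \<in> sets M \<and> measure M (B n) = \<epsilon> n \<and> K n \<subseteq> B n) \<and> B (Suc n) \<subseteq> B n"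
  proof (rule dependent_nat_choice)
    have "K 0 \<subseteq> space M" "measure M (space M) = 1"
      using sets.sets_into_space[OF K(1)] by (auto simp: prob_space)
    then show "\<exists>B. B \<in> sets M \<and> measure M B = \<epsilon> 0 \<and> K 0 \<subseteq> B"
      using non_atomic_intermediate_set[OF na K(1)[of 0] sets.top, of "\<epsilon> 0"] K_le \<epsilon>_le_1 by auto
  next
    fix X n assume X: "X \<in> sets M \<and> measure M X = \<epsilon> n \<and> K n \<subseteq> X"
    have "K (Suc n) \<subseteq> X" "\<epsilon> (Suc n) \<le> \<epsilon> n"
      using X K(2) \<open>decseq \<epsilon>\<close> by (auto simp: decseq_Suc_iff)
    then show "\<exists>Y. (Y \<in> sets M \<and> measure M Y = \<epsilon> (Suc n) \<and> K (Suc n) \<subseteq> Y) \<and> Y \<subseteq> X"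
      using non_atomic_intermediate_set[OF na K(1)[of "Suc n"], of X "\<epsilon> (Suc n)"] X K_le by auto
  qed
  then show ?thesis by blast
qed

lemma (in finite_measure) measure_vimage_finite_le:
  fixes \<beta> :: real
  assumes "l \<in> M \<rightarrow>\<^sub>M count_space UNIV" and "finite S"
    and "\<And>s. s \<in> S \<Longrightarrow> measure M (l -` {s} \<inter> space M) \<le> \<beta>"
  shows "measure M (l -` S \<inter> space M) \<le> card S * \<beta>"
proof -
  have "measure M (\<Union>s\<in>S. l -` {s} \<inter> space M) \<le> (\<Sum>s\<in>S. measure M (l -` {s} \<inter> space M))"
    using measurable_sets[OF assms(1)] \<open>finite S\<close> by (intro measure_UNION_le) auto
  moreover have "(\<Union>s\<in>S. l -` {s} \<inter> space M) = l -` S \<inter> space M"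
    by auto
  ultimately have "measure M (l -` S \<inter> space M) \<le> (\<Sum>s\<in>S. measure M (l -` {s} \<inter> space M))"
    by simp
  also have "\<dots> \<le> card S * \<beta>"
    using sum_mono[of S _ "\<lambda>_. \<beta>"] assms(3) by simp
  finally show ?thesis .
qed

lemma (in finite_measure) measure_UN_le_suminf:
  assumes "\<And>i. A i \<in> sets M" and "\<And>i. measure M (A i) \<le> b i" and "summable b"
  shows "measure M (\<Union>i. A i) \<le> (\<Sum>i. b i)"
proof -
  have "summable (\<lambda>i. measure M (A i))"
    using assms(2) by (intro summable_comparison_test'[OF assms(3)]) auto
  then have "measure M (\<Union>i. A i) \<le> (\<Sum>i. measure M (A i))"
    using assms(1) by (intro finite_measure_subadditive_countably) auto
  also have "\<dots> \<le> (\<Sum>i. b i)"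
    using assms(2,3) \<open>summable (\<lambda>i. measure M (A i))\<close> by (intro suminf_le) auto
  finally show ?thesis .
qed

section \<open>Blocks of positions\<close>

text \<open>The positions \<open>0, \<dots>, sum_list ds - 1\<close> are cut into consecutive blocks of lengths \<open>ds\<close>;
  \<open>block_end_length ds s\<close> is the length of the block whose last position is \<open>s\<close>, and \<open>0\<close> if
  \<open>s\<close> is not the last position of a block.\<close>
fun block_end_length :: "nat list \<Rightarrow> nat \<Rightarrow> nat" where
  "block_end_length [] s = 0"
| "block_end_length (d # ds) s =
     (if s < d then if Suc s = d then d else 0 else block_end_length ds (s - d))"

lemma Collect_less_add_eq:
  "{s::nat. s < d + m \<and> P s} = {s. s < d \<and> P s} \<union> (\<lambda>s. s + d) ` {s. s < m \<and> P (s + d)}"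
proof -
  have "s \<in> (\<lambda>s. s + d) ` {s. s < m \<and> P (s + d)}" if "d \<le> s" "s < d + m" "P s" for s
    using that by (intro image_eqI[of _ _ "s - d"]) auto
  then show ?thesis by (auto simp: not_less) (meson not_less)
qed

lemma card_Collect_less_add:
  "card {s::nat. s < d + m \<and> P s} = card {s. s < d \<and> P s} + card {s. s < m \<and> P (s + d)}"
  unfolding Collect_less_add_eq
  by (subst card_Un_disjoint) (auto simp: card_image inj_on_def)

lemma card_block_end_length_ge:
  assumes "0 < n"
  shows "card {s. s < sum_list ds \<and> n \<le> block_end_length ds s} = length (filter (\<lambda>d. n \<le> d) ds)"
proof (induction ds)
  case (Cons d ds)
  have "{s. s < d \<and> n \<le> block_end_length (d # ds) s} = (if n \<le> d then {d - 1} else {})"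
    using assms by auto
  then show ?case
    using Cons.IH by (simp add: card_Collect_less_add)
qed simp

lemma card_far_from_block_ends:
  "card {i. i < sum_list ds \<and> \<not> (\<exists>s<sum_list ds. i + N \<le> s \<and> s \<le> i + block_end_length ds s)}
     \<le> N * length ds"
proof (induction ds)
  case (Cons d ds)
  define Q where "Q ds i \<longleftrightarrow> \<not> (\<exists>s<sum_list ds. i + N \<le> s \<and> s \<le> i + block_end_length ds s)"
    for ds i
  have "{i. i < d \<and> Q (d # ds) i} \<subseteq> {d - N..<d}"
  proof
    fix i assume i: "i \<in> {i. i < d \<and> Q (d # ds) i}"
    have "\<not> i + N \<le> d - 1"
    proof
      assume "i + N \<le> d - 1"
      moreover have "d - 1 < sum_list (d # ds)" "d - 1 \<le> i + block_end_length (d # ds) (d - 1)"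
        using i by auto
      ultimately show False
        using i unfolding Q_def by blast
    qed
    then show "i \<in> {d - N..<d}" using i by auto
  qed
  then have "card {i. i < d \<and> Q (d # ds) i} \<le> card {d - N..<d}"
    by (intro card_mono) auto
  then have first_block: "card {i. i < d \<and> Q (d # ds) i} \<le> N"
    by simp
  have "Q ds i" if "Q (d # ds) (i + d)" for i
    unfolding Q_def
  proof
    assume "\<exists>s<sum_list ds. i + N \<le> s \<and> s \<le> i + block_end_length ds s"
    then obtain s where "s + d < sum_list (d # ds)" "i + d + N \<le> s + d"
      "s + d \<le> i + d + block_end_length (d # ds) (s + d)"
      by auto
    then show False
      using that unfolding Q_def by blast
  qed
  then have "{i. i < sum_list ds \<and> Q (d # ds) (i + d)} \<subseteq> {i. i < sum_list ds \<and> Q ds i}"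
    by blast
  then have "card {i. i < sum_list ds \<and> Q (d # ds) (i + d)} \<le> card {i. i < sum_list ds \<and> Q ds i}"
    by (intro card_mono) auto
  also have "\<dots> \<le> N * length ds"
    using Cons.IH unfolding Q_def .
  finally show ?case
    using first_block card_Collect_less_add[of d "sum_list ds" "Q (d # ds)"] unfolding Q_def by simp
qed simp

lemma length_mult_le_sum_list: "\<forall>x\<in>set xs. D \<le> x \<Longrightarrow> length xs * D \<le> sum_list xs"
  using sum_list_mono[of xs "\<lambda>_. D" "\<lambda>x. x"] by (simp add: sum_list_triv)

lemma sum_list_eq_sum_length_filter_ge:
  "\<forall>x\<in>set xs. x \<le> B \<Longrightarrow> sum_list xs = (\<Sum>n=1..B. length (filter (\<lambda>d. n \<le> d) xs))"
proof (induction xs)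
  case (Cons x xs)
  have "(\<Sum>n=1..B. length (filter (\<lambda>d. n \<le> d) (x # xs)))
      = (\<Sum>n=1..B. if n \<le> x then 1 else 0) + (\<Sum>n=1..B. length (filter (\<lambda>d. n \<le> d) xs))"
    unfolding sum.distrib[symmetric] by (intro sum.cong) auto
  also have "(\<Sum>n=1..B. if n \<le> x then 1 else 0) = card ({1..B} \<inter> {..x})"
    by (simp add: sum.If_cases Int_def)
  also have "{1..B} \<inter> {..x} = {1..x}"
    using Cons.prems by auto
  finally show ?case
    using Cons by simp
qed simp

lemma sum_telescope_decseq_nat:
  fixes F :: "nat \<Rightarrow> nat"
  assumes "decseq F" and "m \<le> n"
  shows "(\<Sum>d=m..<n. F d - F (Suc d)) = F m - F n"
  using \<open>m \<le> n\<close>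
proof (induction n rule: dec_induct)
  case (step n)
  have "F (Suc n) \<le> F n" "F n \<le> F m"
    using \<open>decseq F\<close> \<open>m \<le> n\<close> by (auto simp: decseq_def)
  with step.IH \<open>m \<le> n\<close> show ?case
    by simp
qed simp

lemma exists_list_with_ge_counts:
  fixes F :: "nat \<Rightarrow> nat"
  assumes "decseq F" and "F E = 0"
  shows "\<exists>ds. (\<forall>d\<in>set ds. D \<le> d \<and> d < E) \<and> (\<forall>n. length (filter (\<lambda>d. n \<le> d) ds) = F (max n D)) \<and>
           sum_list ds = (\<Sum>n=1..E. F (max n D))"
proof -
  define ds where "ds = concat (map (\<lambda>d. replicate (F d - F (Suc d)) d) [D..<E])"
  have "length (filter (\<lambda>d. n \<le> d) ds) = F (max n D)" for n
  proof -
    have "length (filter (\<lambda>d. n \<le> d) ds) = (\<Sum>d=D..<E. if n \<le> d then F d - F (Suc d) else 0)"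
      unfolding ds_def
      by (simp add: filter_concat length_concat comp_def filter_replicate
                    sum_set_upt_conv_sum_list_nat[symmetric])
        (intro sum.cong, auto)
    also have "\<dots> = (\<Sum>d=max n D..<E. F d - F (Suc d))"
      by (rule sum.mono_neutral_cong_right) auto
    also have "\<dots> = F (max n D)"
    proof (cases "max n D \<le> E")
      case True
      then show ?thesis
        using sum_telescope_decseq_nat[OF \<open>decseq F\<close> True] \<open>F E = 0\<close> by simp
    next
      case False
      then have "F (max n D) \<le> F E"
        using \<open>decseq F\<close> unfolding decseq_def by (meson nle_le)
      moreover have "{max n D..<E} = {}"
        using False by auto
      ultimately show ?thesis
        using \<open>F E = 0\<close> by (metis le_zero_eq sum.empty)
    qed
    finally show ?thesis .
  qed
  moreover have "\<forall>d\<in>set ds. D \<le> d \<and> d < E"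
    by (auto simp: ds_def)
  moreover have "sum_list ds = (\<Sum>n=1..E. F (max n D))"
    using sum_list_eq_sum_length_filter_ge[of ds E] calculation by (simp add: less_imp_le)
  ultimately show ?thesis by blast
qed

lemma exists_tail_sum_gt:
  fixes \<epsilon> :: "nat \<Rightarrow> real"
  assumes \<epsilon>_nonneg: "\<And>n. 0 \<le> \<epsilon> n" and "\<not> summable \<epsilon>"
  shows "\<exists>E>D. a < (\<Sum>n=D..<E. \<epsilon> n)"
proof -
  obtain E where E: "\<bar>a\<bar> + (\<Sum>n<D. \<epsilon> n) < (\<Sum>n<E. \<epsilon> n)"
    using summableI_nonneg_bounded[of \<epsilon> "\<bar>a\<bar> + (\<Sum>n<D. \<epsilon> n)"] assms by (meson not_le)
  have "D < E"
  proof (rule ccontr)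
    assume "\<not> D < E"
    then have "(\<Sum>n<E. \<epsilon> n) \<le> (\<Sum>n<D. \<epsilon> n)"
      using \<epsilon>_nonneg by (intro sum_mono2) auto
    with E show False
      by linarith
  qed
  moreover have "(\<Sum>n<E. \<epsilon> n) = (\<Sum>n<D. \<epsilon> n) + (\<Sum>n=D..<E. \<epsilon> n)"
    using \<open>D < E\<close> by (simp add: lessThan_atLeast0 sum.atLeastLessThan_concat)
  ultimately show ?thesis
    using E by (intro exI[of _ E]) linarith
qed

lemma exists_block_lengths:
  fixes \<epsilon> :: "nat \<Rightarrow> real" and c :: real and D :: nat
  assumes "decseq \<epsilon>" and \<epsilon>_nonneg: "\<And>n. 0 \<le> \<epsilon> n" and "\<not> summable \<epsilon>"
    and "0 < c" and "0 < D"
  shows "\<exists>ds. ds \<noteq> [] \<and> (\<forall>d\<in>set ds. D \<le> d) \<and>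
           (\<forall>n. real (length (filter (\<lambda>d. n \<le> d) ds)) \<le> c * real (sum_list ds) * \<epsilon> n)"
proof -
  obtain E where "D < E" and sum_\<epsilon>: "2 / c < (\<Sum>n=D..<E. \<epsilon> n)"
    using exists_tail_sum_gt[OF \<epsilon>_nonneg \<open>\<not> summable \<epsilon>\<close>] by blast
  define H where "H = c * E"
  define F where "F d = (if d < E then nat \<lfloor>H * \<epsilon> (max d D)\<rfloor> else 0)" for d
  have H_nonneg: "0 \<le> H * \<epsilon> n" for n
    using \<open>0 < c\<close> \<epsilon>_nonneg by (simp add: H_def)
  have "decseq F"
  proof (rule decseq_SucI)
    fix d
    have "\<epsilon> (max (Suc d) D) \<le> \<epsilon> (max d D)"
      using \<open>decseq \<epsilon>\<close> by (simp add: decseq_def)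
    then have "H * \<epsilon> (max (Suc d) D) \<le> H * \<epsilon> (max d D)"
      using \<open>0 < c\<close> by (simp add: H_def mult_left_mono)
    then show "F (Suc d) \<le> F d"
      by (simp add: F_def floor_mono nat_mono)
  qed
  then obtain ds where ds: "\<forall>d\<in>set ds. D \<le> d \<and> d < E"
    and count: "\<And>n. length (filter (\<lambda>d. n \<le> d) ds) = F (max n D)"
    and sum_ds: "sum_list ds = (\<Sum>n=1..E. F (max n D))"
    using exists_list_with_ge_counts[of F E D] by (auto simp: F_def)
  have "real E \<le> real (sum_list ds)"
  proof -
    have "2 \<le> c * (\<Sum>n=D..<E. \<epsilon> n)"
      using sum_\<epsilon> \<open>0 < c\<close> by (simp add: pos_divide_less_eq mult.commute)
    then have "2 * E \<le> H * (\<Sum>n=D..<E. \<epsilon> n)"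
      using mult_left_mono[of 2 "c * (\<Sum>n=D..<E. \<epsilon> n)" "real E"]
      by (simp add: H_def mult.commute mult.left_commute)
    then have "2 * E - (E - D) \<le> (\<Sum>n=D..<E. H * \<epsilon> n - 1)"
      by (simp add: sum_subtractf sum_distrib_left)
    also have "\<dots> \<le> (\<Sum>n=D..<E. real (F (max n D)))"
      using H_nonneg by (intro sum_mono) (simp add: F_def max_absorb1)
    also have "\<dots> \<le> real (sum_list ds)"
      unfolding sum_ds using \<open>0 < D\<close> by (simp only: of_nat_sum) (intro sum_mono2, auto)
    finally show ?thesis
      using \<open>D < E\<close> by simp
  qed
  have "real (length (filter (\<lambda>d. n \<le> d) ds)) \<le> c * real (sum_list ds) * \<epsilon> n" for n
  proof -
    have "real (length (filter (\<lambda>d. n \<le> d) ds)) \<le> H * \<epsilon> (max n D)"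
      using H_nonneg by (simp add: count F_def)
    also have "\<dots> \<le> H * \<epsilon> n"
      using \<open>decseq \<epsilon>\<close> \<open>0 < c\<close> by (intro mult_left_mono) (auto simp: H_def decseq_def)
    also have "\<dots> \<le> c * real (sum_list ds) * \<epsilon> n"
      unfolding H_def using \<open>real E \<le> real (sum_list ds)\<close> \<open>0 < c\<close> \<epsilon>_nonneg
      by (intro mult_right_mono mult_left_mono) auto
    finally show ?thesis .
  qed
  moreover have "ds \<noteq> []"
    using \<open>real E \<le> real (sum_list ds)\<close> \<open>D < E\<close> by auto
  ultimately show ?thesis
    using ds by (intro exI[of _ ds]) simp
qed

section \<open>Hitting times and tower levels\<close>

lemma funpow_funpow_apply: "(T ^^ k) ((T ^^ N) x) = (T ^^ (k + N)) x"
  by (simp add: funpow_add)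

definition hitting_time :: "('a \<Rightarrow> 'a) \<Rightarrow> 'a set \<Rightarrow> 'a \<Rightarrow> nat" where
  "hitting_time T F x = (LEAST k. (T ^^ k) x \<in> F)"

lemma funpow_hitting_time_in:
  "(T ^^ k) x \<in> F \<Longrightarrow> (T ^^ hitting_time T F x) x \<in> F"
  unfolding hitting_time_def by (rule LeastI)

lemma hitting_time_funpow:
  assumes "(T ^^ k) x \<in> F" and "n \<le> hitting_time T F x"
  shows "hitting_time T F ((T ^^ n) x) = hitting_time T F x - n"
  unfolding hitting_time_def[of T F "(T ^^ n) x"]
proof (rule Least_equality)
  have "(T ^^ (hitting_time T F x - n + n)) x \<in> F"
    using funpow_hitting_time_in[OF assms(1)] assms(2) by simp
  then show "(T ^^ (hitting_time T F x - n)) ((T ^^ n) x) \<in> F"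
    by (simp add: funpow_add)
next
  fix k assume "(T ^^ k) ((T ^^ n) x) \<in> F"
  then have "hitting_time T F x \<le> k + n"
    unfolding hitting_time_def by (intro Least_le) (simp add: funpow_add)
  then show "hitting_time T F x - n \<le> k" by simp
qed

lemma hitting_time_eq_Suc:
  assumes "(T ^^ k) x \<in> F" and "x \<notin> F"
  shows "hitting_time T F x = Suc (hitting_time T F (T x))"
proof -
  have "hitting_time T F x \<noteq> 0"
    using funpow_hitting_time_in[OF assms(1)] assms(2) by (metis funpow_0)
  then show ?thesis
    using hitting_time_funpow[OF assms(1), of 1] by simp
qed

text \<open>Points of \<open>F\<close> sit on the top level \<open>h - 1\<close>; since the hitting time drops by one per step,
  an orbit that reaches \<open>F\<close> climbs one level per step until it wraps around at the top.\<close>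
definition tower_level :: "nat \<Rightarrow> ('a \<Rightarrow> 'a) \<Rightarrow> 'a set \<Rightarrow> 'a \<Rightarrow> nat" where
  "tower_level h T F x = h - 1 - hitting_time T F x mod h"

lemma tower_level_less: "0 < h \<Longrightarrow> tower_level h T F x < h"
  by (simp add: tower_level_def)

lemma tower_level_funpow:
  assumes "(T ^^ k) x \<in> F" and "tower_level h T F x + n < h"
  shows "tower_level h T F ((T ^^ n) x) = tower_level h T F x + n"
proof -
  let ?q = "hitting_time T F x"
  have "n \<le> ?q mod h" "?q mod h < h"
    using assms(2) by (auto simp: tower_level_def)
  moreover have "?q - n = (?q mod h - n) + ?q div h * h"
    using div_mult_mod_eq[of ?q h] \<open>n \<le> ?q mod h\<close> by linarith
  ultimately have "(?q - n) mod h = ?q mod h - n"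
    by (metis mod_mult_self1 mod_less less_imp_diff_less)
  moreover have "n \<le> ?q"
    using \<open>n \<le> ?q mod h\<close> mod_less_eq_dividend order_trans by blast
  ultimately show ?thesis
    using hitting_time_funpow[OF assms(1)] \<open>n \<le> ?q mod h\<close> \<open>?q mod h < h\<close>
    by (simp add: tower_level_def)
qed

lemma tower_level_pred:
  assumes "(T ^^ k) x \<in> F" and "x \<notin> F" and "0 < tower_level h T F (T x)"
  shows "tower_level h T F x = tower_level h T F (T x) - 1"
proof -
  let ?r = "hitting_time T F (T x) mod h"
  have "Suc ?r < h"
    using assms(3) by (simp add: tower_level_def)
  then have "hitting_time T F x mod h = Suc ?r"
    by (simp add: hitting_time_eq_Suc[OF assms(1,2)] mod_Suc)
  then show ?thesis
    by (simp add: tower_level_def)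
qed

lemma le_inverse_plus_increments:
  fixes a :: "nat \<Rightarrow> real"
  assumes mono: "\<And>s. Suc s < h \<Longrightarrow> a s \<le> a (Suc s)"
    and incr: "\<And>s. Suc s < h \<Longrightarrow> a (Suc s) \<le> a s + \<delta>"
    and sum: "(\<Sum>s<h. a s) = 1" and "s < h"
  shows "a s \<le> 1 / h + s * \<delta>"
proof -
  have "a 0 \<le> a s" if "s < h" for s
    using that by (induction s) (auto intro: order_trans mono)
  then have "(\<Sum>s<h. a 0) \<le> 1"
    unfolding sum[symmetric] by (intro sum_mono) auto
  then have "a 0 \<le> 1 / h"
    using \<open>s < h\<close> by (simp add: field_simps)
  moreover have "a s \<le> a 0 + s * \<delta>" if "s < h" for s
    using that by (induction s) (auto simp: algebra_simps intro: order_trans incr)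
  ultimately show ?thesis
    using \<open>s < h\<close> by fastforce
qed

section \<open>Ergodic measure-preserving systems\<close>

locale ergodic_system = prob_space M for M :: "'a measure" +
  fixes T :: "'a \<Rightarrow> 'a"
  assumes space_eq_UNIV: "space M = UNIV"
    and T_measurable: "T \<in> M \<rightarrow>\<^sub>M M"
    and measure_T_vimage: "A \<in> sets M \<Longrightarrow> measure M (T -` A) = measure M A"
    and ergodic: "ergodic M T"
begin

lemma funpow_measurable: "T ^^ n \<in> M \<rightarrow>\<^sub>M M"
  by (induction n) (auto intro: measurable_compose[OF _ T_measurable] simp: funpow_Suc_right)

lemma vimage_sets: "f \<in> M \<rightarrow>\<^sub>M M \<Longrightarrow> A \<in> sets M \<Longrightarrow> f -` A \<in> sets M"
  using measurable_sets[of f M M A] by (simp add: space_eq_UNIV)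

lemma measure_funpow_vimage: "A \<in> sets M \<Longrightarrow> measure M ((T ^^ n) -` A) = measure M A"
proof (induction n)
  case (Suc n)
  have "measure M ((T ^^ Suc n) -` A) = measure M (T -` (T ^^ n) -` A)"
    by (simp add: funpow_Suc_right vimage_comp del: funpow.simps)
  also have "\<dots> = measure M A"
    using Suc vimage_sets[OF funpow_measurable] by (simp add: measure_T_vimage)
  finally show ?case .
qed simp

lemma frequently_visits_eq_INT_UN:
  "{x. \<exists>\<^sub>\<infinity>k. (T ^^ k) x \<in> F} = (\<Inter>N. (T ^^ N) -` (\<Union>k. (T ^^ k) -` F))"
proof -
  have "(\<exists>k\<ge>N. P k) \<longleftrightarrow> (\<exists>k. P (k + N))" for P :: "nat \<Rightarrow> bool" and N
    by (metis le_add2 le_add_diff_inverse2)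
  then show ?thesis
    by (auto simp: INFM_nat_le funpow_funpow_apply)
qed

lemma measure_le_measure_frequently_visits:
  assumes F: "F \<in> sets M"
  shows "measure M F \<le> measure M {x. \<exists>\<^sub>\<infinity>k. (T ^^ k) x \<in> F}"
proof -
  define G where "G N = (T ^^ N) -` (\<Union>k. (T ^^ k) -` F)" for N
  have G_sets: "G N \<in> sets M" for N
    unfolding G_def using F by (auto intro!: vimage_sets[OF funpow_measurable])
  have G_eq: "G N = {x. \<exists>k. (T ^^ (k + N)) x \<in> F}" for N
    by (auto simp: G_def funpow_funpow_apply simp del: funpow.simps)
  have "G (Suc N) \<subseteq> G N" for N
  proof
    fix x assume "x \<in> G (Suc N)"
    then obtain k where "(T ^^ (Suc k + N)) x \<in> F"
      by (auto simp: G_eq simp del: funpow.simps)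
    then show "x \<in> G N"
      unfolding G_eq by blast
  qed
  then have "(\<lambda>N. measure M (G N)) \<longlonglongrightarrow> measure M (\<Inter>N. G N)"
    using G_sets by (intro finite_Lim_measure_decseq decseq_SucI) auto
  moreover have "(\<lambda>N. measure M (G N)) = (\<lambda>_. measure M (G 0))"
    using G_sets[of 0] unfolding G_def by (simp add: measure_funpow_vimage)
  ultimately have "measure M (\<Inter>N. G N) = measure M (G 0)"
    by (simp add: LIMSEQ_const_iff)
  moreover have "measure M F \<le> measure M (G 0)"
    using G_sets[of 0] by (intro finite_measure_mono) (auto simp: G_def intro!: exI[of _ 0])
  ultimately show ?thesis
    by (simp add: frequently_visits_eq_INT_UN G_def)
qed

lemma AE_frequently_visits:
  assumes F: "F \<in> sets M" and "0 < measure M F"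
  shows "AE x in M. \<exists>\<^sub>\<infinity>k. (T ^^ k) x \<in> F"
proof -
  let ?I = "{x. \<exists>\<^sub>\<infinity>k. (T ^^ k) x \<in> F}"
  have "?I \<in> sets M"
    unfolding frequently_visits_eq_INT_UN using F
    by (auto intro!: vimage_sets[OF funpow_measurable])
  moreover have "T -` ?I \<inter> space M = ?I"
  proof -
    have "(\<exists>\<^sub>\<infinity>k. (T ^^ k) (T x) \<in> F) \<longleftrightarrow> (\<exists>\<^sub>\<infinity>k. (T ^^ k) x \<in> F)" for x
      using eventually_sequentially_Suc[of "\<lambda>k. (T ^^ k) x \<notin> F"]
      by (simp add: frequently_def cofinite_eq_sequentially funpow_swap1[symmetric])
    then show ?thesis
      by (auto simp: space_eq_UNIV)
  qed
  ultimately have "measure M ?I = 0 \<or> measure M ?I = 1"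
    using ergodic unfolding ergodic_def by blast
  moreover have "0 < measure M ?I"
    using measure_le_measure_frequently_visits[OF F] \<open>0 < measure M F\<close> by linarith
  ultimately have "AE x in M. x \<in> ?I"
    by (intro AE_prob_1) simp
  then show ?thesis
    by simp
qed

lemma tower_level_measurable:
  assumes "F \<in> sets M"
  shows "tower_level h T F \<in> M \<rightarrow>\<^sub>M count_space UNIV"
proof -
  have "(\<lambda>x. (T ^^ k) x \<in> F) \<in> M \<rightarrow>\<^sub>M count_space UNIV" for k
    using vimage_sets[OF funpow_measurable assms, of k] by (simp add: pred_def space_eq_UNIV vimage_def)
  then show ?thesis
    unfolding tower_level_def hitting_time_def by measurable
qed

lemma measure_tower_level_le:
  assumes F: "F \<in> sets M" "0 < measure M F" and "s < h"
  shows "measure M (tower_level h T F -` {s}) \<le> 1 / h + s * measure M F"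
proof -
  define l where "l = tower_level h T F"
  define a where "a s = measure M (l -` {s})" for s
  have level_sets: "l -` S \<in> sets M" for S
    using measurable_sets[OF tower_level_measurable[OF F(1)], of S] by (simp add: l_def space_eq_UNIV)
  have visits: "AE x in M. \<exists>k. (T ^^ k) x \<in> F"
    using AE_frequently_visits[OF F] by (rule eventually_mono) (rule INFM_EX)
  have "a s \<le> a (Suc s)" if "Suc s < h" for s
  proof -
    have "AE x in M. x \<in> l -` {s} \<longrightarrow> x \<in> T -` l -` {Suc s}"
      using visits by eventually_elim (use that in \<open>auto simp: l_def dest: tower_level_funpow[where n = 1]\<close>)
    then have "a s \<le> measure M (T -` l -` {Suc s})"
      unfolding a_def by (intro finite_measure_mono_AE vimage_sets[OF T_measurable] level_sets)
    then show ?thesis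
      by (simp add: a_def measure_T_vimage level_sets)
  qed
  moreover have "a (Suc s) \<le> a s + measure M F" if "Suc s < h" for s
  proof -
    have "AE x in M. x \<in> T -` l -` {Suc s} \<longrightarrow> x \<in> l -` {s} \<union> F"
      using visits
      by eventually_elim (auto simp: l_def, metis tower_level_pred diff_Suc_1 zero_less_Suc)
    then have "measure M (T -` l -` {Suc s}) \<le> measure M (l -` {s} \<union> F)"
      using F(1) by (intro finite_measure_mono_AE) (auto intro: level_sets)
    also have "\<dots> \<le> a s + measure M F"
      unfolding a_def using F(1) by (intro measure_Un_le level_sets)
    finally show ?thesis
      by (simp add: a_def measure_T_vimage level_sets)
  qed
  moreover have "(\<Sum>s<h. a s) = 1"
  proof -
    have "(\<Sum>s<h. a s) = measure M (\<Union>s<h. l -` {s})"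
      unfolding a_def using level_sets
      by (intro finite_measure_finite_Union[symmetric]) (auto simp: disjoint_family_on_def)
    also have "(\<Union>s<h. l -` {s}) = space M"
      using tower_level_less[of h T F] \<open>s < h\<close> by (auto simp: l_def space_eq_UNIV)
    finally show ?thesis by (simp add: prob_space)
  qed
  ultimately show ?thesis
    using \<open>s < h\<close> unfolding a_def l_def by (rule le_inverse_plus_increments)
qed

definition tower_levels :: "nat \<Rightarrow> ('a \<Rightarrow> nat) \<Rightarrow> bool" where
  "tower_levels h l \<longleftrightarrow> l \<in> M \<rightarrow>\<^sub>M count_space UNIV \<and> (\<forall>x. l x < h) \<and>
     (AE x in M. \<forall>n. l x + n < h \<longrightarrow> l ((T ^^ n) x) = l x + n) \<and>
     (\<forall>s. measure M (l -` {s}) \<le> 2 / h)"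

lemma tower_levels_pos: "tower_levels h l \<Longrightarrow> 0 < h"
  by (auto simp: tower_levels_def dest: spec[of _ undefined])

lemma tower_levels_Collect_sets:
  assumes "tower_levels h l"
  shows "{x. P (l x)} \<in> sets M"
proof -
  have "{x. P (l x)} = l -` {s. P s} \<inter> space M"
    by (auto simp: space_eq_UNIV)
  then show ?thesis
    using assms measurable_sets[of l M "count_space UNIV" "{s. P s}"] by (simp add: tower_levels_def)
qed

lemma measure_tower_levels_le:
  assumes l: "tower_levels h l" and "finite S"
  shows "measure M (l -` S) \<le> 2 * card S / h"
  using measure_vimage_finite_le[of l S "2 / h"] l \<open>finite S\<close>
  by (simp add: tower_levels_def space_eq_UNIV mult.commute)

lemma exists_tower_levels:
  assumes na: "non_atomic M" and "0 < h"
  shows "\<exists>l. tower_levels h l"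
proof -
  have "measure M (space M) = 1" by (rule prob_space)
  then obtain F where F: "F \<in> sets M" "0 < measure M F" "measure M F < 1 / h ^ 2"
    using non_atomic_small_subset[OF na sets.top, of "1 / h ^ 2"] \<open>0 < h\<close> by auto
  define l where "l = tower_level h T F"
  have "AE x in M. \<exists>k. (T ^^ k) x \<in> F"
    using AE_frequently_visits[OF F(1,2)] by (rule eventually_mono) (rule INFM_EX)
  then have climb: "AE x in M. \<forall>n. l x + n < h \<longrightarrow> l ((T ^^ n) x) = l x + n"
    by eventually_elim (auto simp: l_def intro: tower_level_funpow)
  have "measure M (l -` {s}) \<le> 2 / h" for s
  proof (cases "s < h")
    case True
    have "s * measure M F \<le> h * (1 / h ^ 2)"
      using True F(2,3) by (intro mult_mono) auto
    then have "s * measure M F \<le> 1 / h"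
      using \<open>0 < h\<close> by (simp add: power2_eq_square)
    then show ?thesis
      using measure_tower_level_le[OF F(1,2) True] by (simp add: l_def)
  next
    case False
    then have "l -` {s} = {}"
      using tower_level_less[OF \<open>0 < h\<close>, of T F] by (auto simp: l_def)
    then show ?thesis
      by simp
  qed
  moreover have "\<forall>x. l x < h"
    using \<open>0 < h\<close> by (simp add: l_def tower_level_less)
  ultimately have "tower_levels h l"
    using tower_level_measurable[OF F(1)] climb unfolding tower_levels_def l_def by blast
  then show ?thesis by blast
qed

lemma exists_block_tower:
  fixes \<epsilon> :: "nat \<Rightarrow> real" and c :: real and D :: nat
  assumes "non_atomic M" and "decseq \<epsilon>" and "\<And>n. 0 \<le> \<epsilon> n" and "\<not> summable \<epsilon>"
    and "0 < c" and "0 < D"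
  shows "\<exists>ds l. tower_levels (sum_list ds) l \<and> (\<forall>d\<in>set ds. D \<le> d) \<and>
           (\<forall>n. real (length (filter (\<lambda>d. n \<le> d) ds)) \<le> c * real (sum_list ds) * \<epsilon> n)"
proof -
  obtain ds where ds: "ds \<noteq> []" "\<forall>d\<in>set ds. D \<le> d"
    "\<forall>n. real (length (filter (\<lambda>d. n \<le> d) ds)) \<le> c * real (sum_list ds) * \<epsilon> n"
    using exists_block_lengths[OF assms(2-6)] by blast
  have "0 < sum_list ds"
    using ds(1,2) \<open>0 < D\<close> by (cases ds) auto
  then obtain l where "tower_levels (sum_list ds) l"
    using exists_tower_levels[OF \<open>non_atomic M\<close>] by blast
  with ds(2,3) show ?thesis
    by blast
qed

lemma measure_block_end_length_ge:
  assumes l: "tower_levels (sum_list ds) l" and "0 < n"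
  shows "measure M {x. n \<le> block_end_length ds (l x)}
           \<le> 2 * real (length (filter (\<lambda>d. n \<le> d) ds)) / real (sum_list ds)"
proof -
  let ?S = "{s. s < sum_list ds \<and> n \<le> block_end_length ds s}"
  have "{x. n \<le> block_end_length ds (l x)} = l -` ?S"
    using l by (auto simp: tower_levels_def)
  then show ?thesis
    using measure_tower_levels_le[OF l, of ?S] card_block_end_length_ge[OF \<open>0 < n\<close>] by simp
qed

lemma measure_far_from_block_ends:
  fixes N D :: nat
  assumes l: "tower_levels (sum_list ds) l" and "\<forall>d\<in>set ds. D \<le> d" and "0 < D"
  shows "measure M {x. \<not> (\<exists>s<sum_list ds. l x + N \<le> s \<and> s \<le> l x + block_end_length ds s)}
           \<le> 2 * N / D"
proof -
  have "0 < length ds"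
    using tower_levels_pos[OF l] by (cases ds) auto
  let ?U = "{i. i < sum_list ds \<and> \<not> (\<exists>s<sum_list ds. i + N \<le> s \<and> s \<le> i + block_end_length ds s)}"
  have "{x. \<not> (\<exists>s<sum_list ds. l x + N \<le> s \<and> s \<le> l x + block_end_length ds s)} = l -` ?U"
    using l by (auto simp: tower_levels_def)
  then have "measure M {x. \<not> (\<exists>s<sum_list ds. l x + N \<le> s \<and> s \<le> l x + block_end_length ds s)}
      \<le> 2 * real (card ?U) / real (sum_list ds)"
    using measure_tower_levels_le[OF l, of ?U] by simp
  also have "\<dots> \<le> 2 * real (N * length ds) / real (sum_list ds)"
  proof (rule divide_right_mono)
    show "2 * real (card ?U) \<le> 2 * real (N * length ds)"
      using card_far_from_block_ends[of ds N] by linarith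
  qed simp
  also have "\<dots> \<le> 2 * real (N * length ds) / real (length ds * D)"
  proof (rule divide_left_mono)
    show "0 < real (sum_list ds) * real (length ds * D)"
      using tower_levels_pos[OF l] \<open>0 < D\<close> \<open>0 < length ds\<close> by simp
    show "real (length ds * D) \<le> real (sum_list ds)"
      using length_mult_le_sum_list[OF assms(2)] by (simp only: of_nat_le_iff)
  qed simp
  also have "\<dots> = 2 * N / D"
    using \<open>0 < length ds\<close> \<open>0 < D\<close> by (simp add: field_simps)
  finally show ?thesis .
qed

lemma measure_UN_block_end_length_ge:
  fixes e :: real
  assumes tower: "\<And>j. tower_levels (sum_list (ds j)) (l j)"
    and few: "\<And>j. real (length (filter (\<lambda>d. n \<le> d) (ds j))) \<le> (1/2) ^ j / 4 * real (sum_list (ds j)) * e"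
    and "0 < n"
  shows "measure M (\<Union>j. {x. n \<le> block_end_length (ds j) (l j x)}) \<le> e"
proof -
  have "measure M {x. n \<le> block_end_length (ds j) (l j x)} \<le> (1/2) ^ j * (e / 2)" for j
  proof -
    have h: "0 < real (sum_list (ds j))"
      using tower_levels_pos[OF tower[of j]] by simp
    have "measure M {x. n \<le> block_end_length (ds j) (l j x)}
        \<le> 2 * real (length (filter (\<lambda>d. n \<le> d) (ds j))) / real (sum_list (ds j))"
      by (rule measure_block_end_length_ge[OF tower \<open>0 < n\<close>])
    also have "\<dots> \<le> 2 * ((1/2) ^ j / 4 * real (sum_list (ds j)) * e) / real (sum_list (ds j))"
      using few[of j] by (intro divide_right_mono mult_left_mono) auto
    also have "\<dots> = (1/2) ^ j * (e / 2) * real (sum_list (ds j)) / real (sum_list (ds j))"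
      by (simp add: algebra_simps)
    also have "\<dots> = (1/2) ^ j * (e / 2)"
      using h by (intro nonzero_mult_div_cancel_right) linarith
    finally show ?thesis .
  qed
  then have "measure M (\<Union>j. {x. n \<le> block_end_length (ds j) (l j x)}) \<le> (\<Sum>j. (1/2) ^ j * (e / 2))"
    by (intro measure_UN_le_suminf summable_mult2 summable_geometric tower_levels_Collect_sets[OF tower])
      auto
  also have "(\<Sum>j. (1/2::real) ^ j * (e / 2)) = e"
    using sums_unique[OF sums_mult2[OF geometric_sums[of "1/2::real"], of "e / 2"]] by simp
  finally show ?thesis .
qed

lemma AE_eventually_near_block_end:
  assumes tower: "\<And>j. tower_levels (sum_list (ds j)) (l j)"
    and long: "\<And>j. \<forall>d\<in>set (ds j). 2 ^ j * (j + 1) \<le> d"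
  shows "AE x in M. \<forall>\<^sub>F j in sequentially.
           \<exists>s<sum_list (ds j). l j x + (j + 1) \<le> s \<and> s \<le> l j x + block_end_length (ds j) s"
proof -
  define bad where
    "bad j = {x. \<not> (\<exists>s<sum_list (ds j). l j x + (j + 1) \<le> s \<and> s \<le> l j x + block_end_length (ds j) s)}"
    for j
  have bad_sets: "bad j \<in> sets M" for j
    unfolding bad_def by (rule tower_levels_Collect_sets[OF tower])
  have "measure M (bad j) \<le> 2 * (1/2) ^ j" for j
  proof -
    have "measure M (bad j) \<le> 2 * real (j + 1) / real (2 ^ j * (j + 1))"
      unfolding bad_def using measure_far_from_block_ends[OF tower[of j] long[of j], of "j + 1"]
      by simp
    also have "\<dots> = 2 / 2 ^ j"
      by (simp only: of_nat_mult nonzero_mult_divide_mult_cancel_right of_nat_Suc Suc_eq_plus1[symmetric]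
            of_nat_eq_0_iff Suc_neq_Zero not_False_eq_True of_nat_power of_nat_numeral)
    finally show ?thesis
      by (simp add: power_one_over)
  qed
  then have "summable (\<lambda>j. measure M (bad j))"
    by (intro summable_comparison_test'[OF summable_mult[OF summable_geometric[of "1/2::real"]]]) auto
  then have "AE x in M. \<forall>\<^sub>F j in sequentially. x \<in> space M - bad j"
    using bad_sets by (intro borel_cantelli_AE1) (auto simp: emeasure_eq_measure)
  then show ?thesis
    by (rule eventually_mono) (erule eventually_mono, auto simp: bad_def)
qed

lemma AE_frequently_block_end:
  assumes tower: "\<And>j. tower_levels (sum_list (ds j)) (l j)"
    and long: "\<And>j. \<forall>d\<in>set (ds j). 2 ^ j * (j + 1) \<le> d"
  shows "AE x in M. \<exists>\<^sub>\<infinity>n. 0 < n \<and> (\<exists>j. n \<le> block_end_length (ds j) (l j ((T ^^ n) x)))"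
proof -
  have "AE x in M. \<forall>j n. l j x + n < sum_list (ds j) \<longrightarrow> l j ((T ^^ n) x) = l j x + n"
    using tower by (simp add: tower_levels_def AE_all_countable)
  with AE_eventually_near_block_end[OF tower long] show ?thesis
  proof eventually_elim
    case (elim x)
    then obtain J where J: "\<And>j. J \<le> j \<Longrightarrow>
        \<exists>s<sum_list (ds j). l j x + (j + 1) \<le> s \<and> s \<le> l j x + block_end_length (ds j) s"
      by (auto simp: eventually_sequentially)
    show ?case
      unfolding INFM_nat_le
    proof
      fix m
      define j where "j = max J m"
      obtain s where s: "s < sum_list (ds j)" "l j x + (j + 1) \<le> s"
        "s \<le> l j x + block_end_length (ds j) s"
        using J[of j] by (auto simp: j_def)
      \<comment> \<open>after \<open>n\<close> steps the orbit reaches the last level \<open>s\<close> of the block containing the level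
        of \<open>x\<close>, and this block has length at least \<open>n\<close>\<close>
      define n where "n = s - l j x"
      have "l j ((T ^^ n) x) = s"
        using elim(2) s(1,2) by (simp add: n_def)
      then have "n \<le> block_end_length (ds j) (l j ((T ^^ n) x))"
        using s by (simp add: n_def)
      then have "0 < n \<and> (\<exists>j. n \<le> block_end_length (ds j) (l j ((T ^^ n) x)))"
        using s(2) by (auto simp: n_def)
      moreover have "m \<le> n"
        using s(2) by (simp add: n_def j_def)
      ultimately show "\<exists>n\<ge>m. 0 < n \<and> (\<exists>j. n \<le> block_end_length (ds j) (l j ((T ^^ n) x)))"
        by blast
    qed
  qed
qed

lemma exists_frequently_visited_targets:
  fixes \<epsilon> :: "nat \<Rightarrow> real"
  assumes na: "non_atomic M" and \<epsilon>: "decseq \<epsilon>" "\<And>n. 0 \<le> \<epsilon> n" "\<not> summable \<epsilon>"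
  shows "\<exists>K. (\<forall>n. K n \<in> sets M \<and> measure M (K n) \<le> \<epsilon> n) \<and> decseq K \<and>
           (AE x in M. \<exists>\<^sub>\<infinity>n. (T ^^ n) x \<in> K n)"
proof -
  \<comment> \<open>the \<open>j\<close>-th tower contributes at most \<open>\<epsilon> n / 2 ^ (j + 1)\<close> to \<open>K n\<close>, and its points that
    are too close to the end of their block have measure at most \<open>2 / 2 ^ j\<close>\<close>
  have "\<exists>ds l. tower_levels (sum_list ds) l \<and> (\<forall>d\<in>set ds. 2 ^ j * (j + 1) \<le> d) \<and>
           (\<forall>n. real (length (filter (\<lambda>d. n \<le> d) ds)) \<le> (1/2) ^ j / 4 * real (sum_list ds) * \<epsilon> n)"
    for j :: nat
    by (intro exists_block_tower[OF na \<epsilon>]) simp_all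
  then obtain ds l where tower: "\<And>j. tower_levels (sum_list (ds j)) (l j)"
    and long: "\<And>j. \<forall>d\<in>set (ds j). 2 ^ j * (j + 1) \<le> d"
    and few: "\<And>j n. real (length (filter (\<lambda>d. n \<le> d) (ds j))) \<le> (1/2) ^ j / 4 * real (sum_list (ds j)) * \<epsilon> n"
    by metis
  define K where "K n = (\<Union>j. {x. max n 1 \<le> block_end_length (ds j) (l j x)})" for n
  have K_sets: "K n \<in> sets M" for n
    unfolding K_def by (intro sets.countable_UN) (auto intro: tower_levels_Collect_sets[OF tower])
  have K_le: "measure M (K n) \<le> \<epsilon> n" for n
  proof -
    have "measure M (K n) \<le> \<epsilon> (max n 1)"
      unfolding K_def by (rule measure_UN_block_end_length_ge[OF tower few]) simp
    also have "\<dots> \<le> \<epsilon> n"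
      using \<open>decseq \<epsilon>\<close> by (simp add: decseq_def)
    finally show ?thesis .
  qed
  have "decseq K"
    by (auto simp: decseq_def K_def)
  have "AE x in M. \<exists>\<^sub>\<infinity>n. (T ^^ n) x \<in> K n"
    using AE_frequently_block_end[OF tower long]
  proof (rule eventually_mono)
    fix x assume "\<exists>\<^sub>\<infinity>n. 0 < n \<and> (\<exists>j. n \<le> block_end_length (ds j) (l j ((T ^^ n) x)))"
    then show "\<exists>\<^sub>\<infinity>n. (T ^^ n) x \<in> K n"
      by (rule INFM_mono) (auto simp: K_def max_def, metis Suc_leI le_trans)
  qed
  with K_sets K_le \<open>decseq K\<close> show ?thesis
    by blast
qed

theorem exists_visible_shrinking_target:
  fixes \<epsilon> :: "nat \<Rightarrow> real"
  assumes na: "non_atomic M" and "decseq \<epsilon>" and "\<And>n. 0 \<le> \<epsilon> n" and "\<And>n. \<epsilon> n \<le> 1"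
    and "\<not> summable \<epsilon>"
  shows "\<exists>B. (\<forall>n. B n \<in> sets M \<and> measure M (B n) = \<epsilon> n \<and> B (Suc n) \<subseteq> B n) \<and>
           (AE x in M. \<exists>\<^sub>\<infinity>n. (T ^^ n) x \<in> B n)"
proof -
  obtain K where K: "\<And>n. K n \<in> sets M" "\<And>n. measure M (K n) \<le> \<epsilon> n" "decseq K"
    and visits: "AE x in M. \<exists>\<^sub>\<infinity>n. (T ^^ n) x \<in> K n"
    using exists_frequently_visited_targets[OF na assms(2,3,5)] by blast
  obtain B where B: "\<And>n. B n \<in> sets M \<and> measure M (B n) = \<epsilon> n \<and> K n \<subseteq> B n \<and> B (Suc n) \<subseteq> B n"
    using non_atomic_enlarge_to_measures[OF na K(1,3,2) assms(2,4)] by blast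
  have "AE x in M. \<exists>\<^sub>\<infinity>n. (T ^^ n) x \<in> B n"
    using visits
  proof eventually_elim
    case (elim x)
    then show ?case
      by (rule INFM_mono) (use B in blast)
  qed
  with B show ?thesis
    by blast
qed

end

lemma ergodic_systemI:
  fixes M :: "'a::polish_space measure"
  assumes "standard_prob_space M" and "measure_preserving_map M T" and "ergodic M T"
  shows "ergodic_system M T"
proof -
  interpret prob_space M
    using assms(1) by (simp add: standard_prob_space_def)
  have space: "space M = UNIV"
    using assms(1) sets_eq_imp_space_eq[of M borel] by (simp add: standard_prob_space_def)
  have T: "T \<in> M \<rightarrow>\<^sub>M M" "distr M M T = M"
    using assms(2) by (auto simp: measure_preserving_map_def)
  have "measure M (T -` A) = measure M A" if "A \<in> sets M" for A
    using measure_distr[OF T(1) that] T(2) by (simp add: space)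
  with space T(1) assms(3) show ?thesis
    by unfold_locales
qed

theorem mainTheorem11:
  fixes M :: "'a::polish_space measure" and \<tau> :: "'a \<Rightarrow> 'a" and \<epsilon> :: "nat \<Rightarrow> real"
  assumes "standard_prob_space M" and "non_atomic M"
    and "invertible_mpt M \<tau>" and "ergodic M \<tau>"
    and "\<forall>n\<ge>1. 0 < \<epsilon> n \<and> \<epsilon> n \<le> 1"
    and "\<forall>n\<ge>1. \<epsilon> (Suc n) \<le> \<epsilon> n"
    and "\<epsilon> \<longlonglongrightarrow> 0"
    and "\<not> summable (\<lambda>n. \<epsilon> (Suc n))"
  shows "\<exists>B :: nat \<Rightarrow> 'a set.
           (\<forall>n\<ge>1. B n \<in> sets M \<and> measure M (B n) = \<epsilon> n \<and> B (Suc n) \<subseteq> B n)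
         \<and> (AE x in M. \<exists>\<^sub>\<infinity>n. n \<ge> 1 \<and> (\<tau> ^^ n) x \<in> B n)"
proof -
  \<comment> \<open>The hypotheses only constrain \<open>\<epsilon> n\<close> for \<open>n \<ge> 1\<close>, so \<open>\<epsilon> 0\<close> is replaced by \<open>\<epsilon> 1\<close>.\<close>
  interpret ergodic_system M \<tau>
    using ergodic_systemI assms(1,3,4) by (auto simp: invertible_mpt_def)
  define e where "e n = \<epsilon> (max n 1)" for n
  have "e (Suc n) \<le> e n" for n
    using assms(6) by (cases n) (auto simp: e_def)
  then have "decseq e"
    by (rule decseq_SucI)
  moreover have "\<not> summable e"
    using assms(8) summable_iff_shift[of e 1] by (simp add: e_def)
  ultimately obtain B where B: "\<forall>n. B n \<in> sets M \<and> measure M (B n) = e n \<and> B (Suc n) \<subseteq> B n"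
    and visits: "AE x in M. \<exists>\<^sub>\<infinity>n. (\<tau> ^^ n) x \<in> B n"
    using exists_visible_shrinking_target[OF assms(2), of e] assms(5)
    by (auto simp: e_def less_imp_le)
  have "AE x in M. \<exists>\<^sub>\<infinity>n. n \<ge> 1 \<and> (\<tau> ^^ n) x \<in> B n"
    using visits
  proof eventually_elim
    case (elim x)
    show ?case
      using INFM_conjI[OF elim MOST_ge_nat[of 1]] by (simp add: conj_commute)
  qed
  moreover have "\<forall>n\<ge>1. B n \<in> sets M \<and> measure M (B n) = \<epsilon> n \<and> B (Suc n) \<subseteq> B n"
    using B by (simp add: e_def max_absorb1)
  ultimately show ?thesis
    by blast
qed

end
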